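(* Let $Y\subseteq\omega$ and let $X\subseteq\omega$ be $\Delta^0_2(Y)$. Then there is a sequence of structures $(\mathcal C_i)_{i\in\omega}$, uniformly computable in $Y$, such that for every $i\in\omega$, $\mathcal C_i\cong\mathcal S_0$ if $i\in X$ and $\mathcal C_i\cong\mathcal S_1$ if $i\notin X$.
   Context: Let $\mathcal S=(2^\omega,(F_\nu)_{\nu\in 2^{<\omega}},(R_\nu)_{\nu\in2^{<\omega}})$ where $F_\nu(\sigma)(x)=\sigma(x)+\nu(x)\bmod 2$ (with $\nu(x)=0$ for $x\ge|\nu|$) and $R_\nu(\sigma)$ holds iff $\nu$ is an initial segment of $\sigma$. Let $\hat{\mathcal S}_0$, $\hat{\mathcal S}_1$ be the substructures of $\mathcal S$ generated by the constant sequence $\bar0$, resp. $\bar1$, and let $\mathcal S_0,\mathcal S_1$ be their relational versions obtained by replacing each unary function $F_\nu$ by its graph, a binary relation $graph_{F_\nu}$. Structures have universe $\omega$. *)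

theory Defs
  imports Main
begin

text \<open>A function of arity n is represented as nat list => nat; only its values
on lists of length n matter.\<close>

fun prec :: "(nat list \<Rightarrow> nat) \<Rightarrow> (nat list \<Rightarrow> nat) \<Rightarrow> nat list \<Rightarrow> nat" where
  "prec f g [] = 0"
| "prec f g (0 # xs) = f xs"
| "prec f g (Suc k # xs) = g (k # prec f g (k # xs) # xs)"

inductive recfn :: "nat set \<Rightarrow> nat \<Rightarrow> (nat list \<Rightarrow> nat) \<Rightarrow> bool" for Y :: "nat set" where
  zero: "recfn Y n (\<lambda>_. 0)"
| succ: "recfn Y 1 (\<lambda>xs. Suc (hd xs))"
| proj: "i < n \<Longrightarrow> recfn Y n (\<lambda>xs. xs ! i)"
| orac: "recfn Y 1 (\<lambda>xs. if hd xs \<in> Y then 1 else 0)"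
| compose: "recfn Y m f \<Longrightarrow> length gs = m \<Longrightarrow> (\<forall>g\<in>set gs. recfn Y n g)
          \<Longrightarrow> recfn Y n (\<lambda>xs. f (map (\<lambda>g. g xs) gs))"
| prim_rec: "recfn Y n f \<Longrightarrow> recfn Y (Suc (Suc n)) g \<Longrightarrow> recfn Y (Suc n) (prec f g)"
| minimize: "recfn Y (Suc n) f \<Longrightarrow> (\<forall>xs. length xs = n \<longrightarrow> (\<exists>k. f (k # xs) = 0))
          \<Longrightarrow> recfn Y n (\<lambda>xs. LEAST k. f (k # xs) = 0)"
| extens: "recfn Y n f \<Longrightarrow> (\<forall>xs. length xs = n \<longrightarrow> g xs = f xs) \<Longrightarrow> recfn Y n g"

definition computable_rel :: "nat set \<Rightarrow> nat \<Rightarrow> (nat list \<Rightarrow> bool) \<Rightarrow> bool" where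
  "computable_rel Y n P \<longleftrightarrow> recfn Y n (\<lambda>xs. if P xs then 1 else 0)"

definition Sigma2 :: "nat set \<Rightarrow> nat set \<Rightarrow> bool" where
  "Sigma2 Y X \<longleftrightarrow> (\<exists>R. computable_rel Y 3 R \<and>
      (\<forall>n. n \<in> X \<longleftrightarrow> (\<exists>a. \<forall>b. R [n, a, b])))"

definition Pi2 :: "nat set \<Rightarrow> nat set \<Rightarrow> bool" where
  "Pi2 Y X \<longleftrightarrow> Sigma2 Y (- X)"

definition Delta2 :: "nat set \<Rightarrow> nat set \<Rightarrow> bool" where
  "Delta2 Y X \<longleftrightarrow> Sigma2 Y X \<and> Pi2 Y X"

text \<open>Strings nu in 2^{<omega} are bool lists; sequences in 2^omega are nat => bool
  (True = 1).  Standard bijective coding of strings by natural numbers.\<close>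

fun str_code :: "bool list \<Rightarrow> nat" where
  "str_code [] = 0"
| "str_code (b # bs) = 2 * str_code bs + (if b then 2 else 1)"

definition nu_val :: "bool list \<Rightarrow> nat \<Rightarrow> bool" where
  "nu_val \<nu> x \<longleftrightarrow> x < length \<nu> \<and> \<nu> ! x"

definition F :: "bool list \<Rightarrow> (nat \<Rightarrow> bool) \<Rightarrow> (nat \<Rightarrow> bool)" where
  "F \<nu> \<sigma> = (\<lambda>x. \<sigma> x \<noteq> nu_val \<nu> x)"

definition R :: "bool list \<Rightarrow> (nat \<Rightarrow> bool) \<Rightarrow> bool" where
  "R \<nu> \<sigma> \<longleftrightarrow> (\<forall>x < length \<nu>. \<sigma> x = \<nu> ! x)"

inductive_set gen :: "bool \<Rightarrow> (nat \<Rightarrow> bool) set" for b :: bool where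
  base: "(\<lambda>_. b) \<in> gen b"
| step: "\<sigma> \<in> gen b \<Longrightarrow> F \<nu> \<sigma> \<in> gen b"

record 'a rstruct =
  univ :: "'a set"
  grel :: "bool list \<Rightarrow> 'a \<Rightarrow> 'a \<Rightarrow> bool"
  urel :: "bool list \<Rightarrow> 'a \<Rightarrow> bool"

text \<open>S_b: relational version of the substructure generated by the constant b
  (S_0 for b = False, S_1 for b = True).\<close>
definition S_rel :: "bool \<Rightarrow> (nat \<Rightarrow> bool) rstruct" where
  "S_rel b = \<lparr> univ = gen b,
              grel = (\<lambda>\<nu> \<sigma> \<tau>. \<sigma> \<in> gen b \<and> \<tau> \<in> gen b \<and> F \<nu> \<sigma> = \<tau>),
              urel = (\<lambda>\<nu> \<sigma>. \<sigma> \<in> gen b \<and> R \<nu> \<sigma>) \<rparr>"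

definition rstruct_iso :: "'a rstruct \<Rightarrow> 'b rstruct \<Rightarrow> bool" where
  "rstruct_iso A B \<longleftrightarrow> (\<exists>h. bij_betw h (univ A) (univ B) \<and>
     (\<forall>\<nu>. \<forall>a\<in>univ A. \<forall>a'\<in>univ A. grel A \<nu> a a' \<longleftrightarrow> grel B \<nu> (h a) (h a')) \<and>
     (\<forall>\<nu>. \<forall>a\<in>univ A. urel A \<nu> a \<longleftrightarrow> urel B \<nu> (h a)))"

text \<open>A sequence of structures with universe omega is uniformly Y-computable if
  its atomic diagrams are uniformly Y-computable (equality on omega being trivially
  decidable).\<close>
definition unif_computable :: "nat set \<Rightarrow> (nat \<Rightarrow> nat rstruct) \<Rightarrow> bool" where
  "unif_computable Y C \<longleftrightarrow> (\<forall>i. univ (C i) = UNIV) \<and>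
     (\<exists>P. computable_rel Y 4 P \<and>
        (\<forall>i \<nu> a a'. grel (C i) \<nu> a a' \<longleftrightarrow> P [i, str_code \<nu>, a, a'])) \<and>
     (\<exists>Q. computable_rel Y 3 Q \<and>
        (\<forall>i \<nu> a. urel (C i) \<nu> a \<longleftrightarrow> Q [i, str_code \<nu>, a]))"

end

theory Submission
  imports Defs
begin

text \<open>
  By the limit lemma, a set X that is Delta^0_2 in Y has a Y-computable approximation G
  with G i s = (i \<in> X) for all sufficiently large s.  In the structure C_i on \<omega> the
  number a stands for the sequence \<not> G i, flipped at the positions of the one-bits of a.
  These sequences are exactly the finite variants of \<not> G i; as \<not> G i is eventually
  constant with value (i \<notin> X), they are exactly the elements of the substructure of S
  generated by that constant sequence, so C_i is isomorphic to S_0 or S_1 as required.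
  Both F_\<nu> and R_\<nu> only inspect finitely many positions of such a sequence, so the atomic
  diagram of C_i is decidable from G, uniformly in i.
\<close>

section \<open>Closure properties of Y-recursive functions and relations\<close>

context
  fixes Y :: "nat set"
begin

lemma recfn_ext:
  "recfn Y n f \<Longrightarrow> (\<And>xs. length xs = n \<Longrightarrow> g xs = f xs) \<Longrightarrow> recfn Y n g"
  using recfn.extens by blast

lemma recfn_compose:
  "recfn Y m f \<Longrightarrow> length gs = m \<Longrightarrow> (\<And>g. g \<in> set gs \<Longrightarrow> recfn Y n g)
   \<Longrightarrow> recfn Y n (\<lambda>xs. f (map (\<lambda>g. g xs) gs))"
  using recfn.compose by blast

lemma recfn_compose1:
  "recfn Y 1 f \<Longrightarrow> recfn Y n g \<Longrightarrow> recfn Y n (\<lambda>xs. f [g xs])"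
  using recfn.compose[of Y 1 f "[g]" n] by auto

lemma recfn_compose2:
  "recfn Y 2 f \<Longrightarrow> recfn Y n g \<Longrightarrow> recfn Y n h \<Longrightarrow> recfn Y n (\<lambda>xs. f [g xs, h xs])"
  using recfn.compose[of Y 2 f "[g, h]" n] by auto

lemma recfn_compose3:
  "recfn Y 3 f \<Longrightarrow> recfn Y n g \<Longrightarrow> recfn Y n h \<Longrightarrow> recfn Y n k
   \<Longrightarrow> recfn Y n (\<lambda>xs. f [g xs, h xs, k xs])"
  using recfn.compose[of Y 3 f "[g, h, k]" n] by (auto simp: numeral_3_eq_3)

lemma recfn_Cons:
  assumes "recfn Y (Suc n) f" and "recfn Y n b"
  shows "recfn Y n (\<lambda>xs. f (b xs # xs))"
proof -
  have "recfn Y n (\<lambda>xs. f (map (\<lambda>g. g xs) (b # map (\<lambda>j xs. xs ! j) [0..<n])))"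
    by (rule recfn_compose[OF assms(1)]) (auto intro: assms(2) recfn.proj)
  then show ?thesis
    by (rule recfn_ext) (simp add: comp_def, metis map_nth)
qed

lemma recfn_Suc: "recfn Y n g \<Longrightarrow> recfn Y n (\<lambda>xs. Suc (g xs))"
  using recfn_compose1[OF recfn.succ] by simp

lemma recfn_const: "recfn Y n (\<lambda>_. c)"
  by (induction c) (auto intro: recfn.zero recfn_Suc)

lemma recfn_by_prec:
  assumes "recfn Y n f" and "recfn Y (Suc (Suc n)) g" and "m = Suc n"
    and "\<And>k xs. h (k # xs) = prec f g (k # xs)"
  shows "recfn Y m h"
  using recfn.prim_rec[OF assms(1,2)] unfolding assms(3)
  by (rule recfn_ext) (auto simp: assms(4) length_Suc_conv)

lemma recfn_pred: "recfn Y 1 (\<lambda>xs. xs ! 0 - 1)"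
proof (rule recfn_by_prec[where n=0 and f="\<lambda>_. 0" and g="\<lambda>xs. xs ! 0"])
  show "(k # xs) ! 0 - 1 = prec (\<lambda>_. 0) (\<lambda>xs. xs ! 0) (k # xs)" for k xs
    by (cases k) auto
qed (auto intro: recfn_const recfn.proj)

lemma recfn_cond: "recfn Y 3 (\<lambda>xs. if xs ! 0 = 0 then xs ! 1 else xs ! 2)"
proof (rule recfn_by_prec[where n=2 and f="\<lambda>xs. xs ! 0" and g="\<lambda>xs. xs ! 3"])
  show "(if (k # xs) ! 0 = 0 then (k # xs) ! 1 else (k # xs) ! 2) =
      prec (\<lambda>xs. xs ! 0) (\<lambda>xs. xs ! 3) (k # xs)" for k xs
    by (cases k) auto
qed (auto intro: recfn.proj)

lemma recfn_add: "recfn Y 2 (\<lambda>xs. xs ! 0 + xs ! 1)"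
proof (rule recfn_by_prec[where n=1 and f="\<lambda>xs. xs ! 0" and g="\<lambda>xs. Suc (xs ! 1)"])
  show "(k # xs) ! 0 + (k # xs) ! 1 = prec (\<lambda>xs. xs ! 0) (\<lambda>xs. Suc (xs ! 1)) (k # xs)" for k xs
    by (induction k) auto
qed (auto intro: recfn_Suc recfn.proj)

lemma recfn_mod2: "recfn Y 1 (\<lambda>xs. xs ! 0 mod 2)"
proof (rule recfn_by_prec[where n=0 and f="\<lambda>_. 0" and g="\<lambda>xs. if xs ! 1 = 0 then 1 else 0"])
  show "recfn Y (Suc (Suc 0)) (\<lambda>xs. if xs ! 1 = 0 then 1 else 0)"
    using recfn_compose3[OF recfn_cond recfn.proj[of 1 2] recfn_const recfn_const]
    by (simp add: numeral_2_eq_2 cong: if_cong)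
  show "(k # xs) ! 0 mod 2 = prec (\<lambda>_. 0) (\<lambda>xs. if xs ! 1 = 0 then 1 else 0) (k # xs)" for k xs
    by (induction k) (auto simp: mod_Suc)
qed (auto intro: recfn_const)

lemma recfn_div2: "recfn Y 1 (\<lambda>xs. xs ! 0 div 2)"
proof (rule recfn_by_prec[where n=0 and f="\<lambda>_. 0" and g="\<lambda>xs. xs ! 1 + xs ! 0 mod 2"])
  show "recfn Y (Suc (Suc 0)) (\<lambda>xs. xs ! 1 + xs ! 0 mod 2)"
    using recfn_compose2[OF recfn_add recfn.proj[of 1 2] recfn_compose1[OF recfn_mod2 recfn.proj[of 0 2]]]
    by (simp add: numeral_2_eq_2)
  show "(k # xs) ! 0 div 2 = prec (\<lambda>_. 0) (\<lambda>xs. xs ! 1 + xs ! 0 mod 2) (k # xs)" for k xs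
  proof (induction k)
    case (Suc k)
    have "Suc k div 2 = k div 2 + k mod 2" by presburger
    then show ?case using Suc by simp
  qed simp
qed (auto intro: recfn_const)

lemma recfn_funpow:
  assumes "recfn Y 1 h"
  shows "recfn Y 2 (\<lambda>xs. ((\<lambda>a. h [a]) ^^ (xs ! 0)) (xs ! 1))"
proof (rule recfn_by_prec[where n=1 and f="\<lambda>xs. xs ! 0" and g="\<lambda>xs. h [xs ! 1]"])
  show "((\<lambda>a. h [a]) ^^ ((k # xs) ! 0)) ((k # xs) ! 1) = prec (\<lambda>xs. xs ! 0) (\<lambda>xs. h [xs ! 1]) (k # xs)"
    for k xs
    by (induction k) auto
qed (auto intro: recfn_compose1[OF assms] recfn.proj)

lemma computable_rel_ext:
  "computable_rel Y n P \<Longrightarrow> (\<And>xs. length xs = n \<Longrightarrow> Q xs = P xs) \<Longrightarrow> computable_rel Y n Q"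
  unfolding computable_rel_def by (erule recfn_ext) auto

lemma computable_rel_compose:
  "computable_rel Y m P \<Longrightarrow> length gs = m \<Longrightarrow> (\<And>g. g \<in> set gs \<Longrightarrow> recfn Y n g)
   \<Longrightarrow> computable_rel Y n (\<lambda>xs. P (map (\<lambda>g. g xs) gs))"
  unfolding computable_rel_def by (drule recfn_compose) auto

lemma computable_rel_reindex:
  "computable_rel Y m P \<Longrightarrow> length js = m \<Longrightarrow> (\<forall>j\<in>set js. j < n)
   \<Longrightarrow> computable_rel Y n (\<lambda>xs. P (map ((!) xs) js))"
  using computable_rel_compose[of m P "map (\<lambda>j xs. xs ! j) js" n]
  by (auto intro: recfn.proj simp: comp_def)

lemma computable_rel_eq_0: "recfn Y n f \<Longrightarrow> computable_rel Y n (\<lambda>xs. f xs = 0)"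
  unfolding computable_rel_def
  using recfn_compose3[OF recfn_cond, where n=n and g=f and h="\<lambda>_. 1" and k="\<lambda>_. 0"]
  by (rule recfn_ext) (auto intro: recfn_const)

lemma computable_rel_not:
  assumes "computable_rel Y n P"
  shows "computable_rel Y n (\<lambda>xs. \<not> P xs)"
  using computable_rel_eq_0[OF assms[unfolded computable_rel_def]] by (rule computable_rel_ext) simp

lemma computable_rel_conj:
  assumes "computable_rel Y n P" and "computable_rel Y n Q"
  shows "computable_rel Y n (\<lambda>xs. P xs \<and> Q xs)"
  using recfn_compose3[OF recfn_cond assms(1)[unfolded computable_rel_def] recfn_const[where c=0]
      assms(2)[unfolded computable_rel_def]]
  unfolding computable_rel_def by (rule recfn_ext) auto

lemma computable_rel_imp:
  "computable_rel Y n P \<Longrightarrow> computable_rel Y n Q \<Longrightarrow> computable_rel Y n (\<lambda>xs. P xs \<longrightarrow> Q xs)"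
  using computable_rel_not[OF computable_rel_conj[OF _ computable_rel_not]] by simp

lemma computable_rel_iff:
  "computable_rel Y n P \<Longrightarrow> computable_rel Y n Q \<Longrightarrow> computable_rel Y n (\<lambda>xs. P xs \<longleftrightarrow> Q xs)"
  using computable_rel_conj[OF computable_rel_imp computable_rel_imp] by (simp add: iff_conv_conj_imp)

lemma computable_rel_ball:
  assumes P: "computable_rel Y (Suc n) P" and b: "recfn Y n b"
  shows "computable_rel Y n (\<lambda>xs. \<forall>x<b xs. P (x # xs))"
proof -
  have drop2: "map ((!) ys) [2..<Suc (Suc n)] = drop 2 ys" if "length ys = Suc (Suc n)" for ys :: "nat list"
    using that by (intro nth_equalityI) (simp_all del: upt_Suc)
  have "computable_rel Y (Suc (Suc n)) (\<lambda>ys. P (map ((!) ys) (0 # [2..<n + 2])))"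
    by (rule computable_rel_reindex[OF P]) auto
  then have P': "computable_rel Y (Suc (Suc n)) (\<lambda>ys. P (ys ! 0 # drop 2 ys))"
    by (rule computable_rel_ext) (simp del: upt_Suc add: drop2)
  define g :: "nat list \<Rightarrow> nat"
    where "g ys = (if ys ! 1 = 0 then 0 else if P (ys ! 0 # drop 2 ys) then 1 else 0)" for ys
  have "recfn Y (Suc (Suc n)) g"
    using recfn_compose3[OF recfn_cond recfn.proj[of 1] recfn_const[where c=0]
        P'[unfolded computable_rel_def]]
    unfolding g_def by (simp cong: if_cong)
  then have "recfn Y n (\<lambda>xs. prec (\<lambda>_. 1) g (b xs # xs))"
    using recfn_Cons[OF recfn.prim_rec[OF recfn_const] b] by blast
  moreover have "prec (\<lambda>_. 1) g (k # xs) = (if \<forall>x<k. P (x # xs) then 1 else 0)" for k xs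
    by (induction k) (auto simp: g_def less_Suc_eq)
  ultimately show ?thesis
    unfolding computable_rel_def by simp
qed

lemma computable_rel_bex:
  "computable_rel Y (Suc n) P \<Longrightarrow> recfn Y n b \<Longrightarrow> computable_rel Y n (\<lambda>xs. \<exists>x<b xs. P (x # xs))"
  using computable_rel_not[OF computable_rel_ball[OF computable_rel_not]] by simp

end

section \<open>The limit lemma\<close>

definition witness_alive :: "(nat list \<Rightarrow> bool) \<Rightarrow> nat \<Rightarrow> nat \<Rightarrow> nat \<Rightarrow> bool" where
  "witness_alive Q i a s \<longleftrightarrow> (\<forall>b\<le>s. Q [i, a, b])"

text \<open>In the limit the least true witness, for i \<in> X or for i \<notin> X, wins.\<close>

definition limit_approx :: "(nat list \<Rightarrow> bool) \<Rightarrow> (nat list \<Rightarrow> bool) \<Rightarrow> nat \<Rightarrow> nat \<Rightarrow> bool" where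
  "limit_approx Q0 Q1 i s \<longleftrightarrow>
     (\<exists>a\<le>s. witness_alive Q0 i a s \<and> (\<forall>a'<a. \<not> witness_alive Q1 i a' s))"

lemma eventually_witnesses_dead:
  assumes "\<forall>a. \<exists>b. \<not> Q [i, a, b]"
  shows "\<forall>\<^sub>F s in sequentially. \<forall>a<A. \<not> witness_alive Q i a s"
proof -
  have "\<forall>\<^sub>F s in sequentially. \<not> witness_alive Q i a s" for a
  proof -
    obtain b where "\<not> Q [i, a, b]" using assms by blast
    then show ?thesis
      unfolding eventually_sequentially witness_alive_def by blast
  qed
  then have "\<forall>\<^sub>F s in sequentially. \<forall>a\<in>{..<A}. \<not> witness_alive Q i a s"
    by (intro eventually_ball_finite) auto
  then show ?thesis
    by (rule eventually_mono) auto
qed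

lemma eventually_limit_approx_iff:
  assumes Q0: "\<forall>i. i \<in> X \<longleftrightarrow> (\<exists>a. \<forall>b. Q0 [i, a, b])"
    and Q1: "\<forall>i. i \<notin> X \<longleftrightarrow> (\<exists>a. \<forall>b. Q1 [i, a, b])"
  shows "\<forall>\<^sub>F s in sequentially. limit_approx Q0 Q1 i s \<longleftrightarrow> i \<in> X"
proof (cases "i \<in> X")
  case True
  then obtain a0 where a0: "\<forall>b. Q0 [i, a0, b]" using Q0 by blast
  have "\<forall>a. \<exists>b. \<not> Q1 [i, a, b]" using Q1 True by blast
  then have "\<forall>\<^sub>F s in sequentially. \<forall>a<a0. \<not> witness_alive Q1 i a s"
    by (rule eventually_witnesses_dead)
  moreover have "\<forall>\<^sub>F s in sequentially. a0 \<le> s"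
    by (rule eventually_ge_at_top)
  ultimately have "\<forall>\<^sub>F s in sequentially. limit_approx Q0 Q1 i s"
    by eventually_elim (use a0 in \<open>auto simp: limit_approx_def witness_alive_def\<close>)
  then show ?thesis using True by simp
next
  case False
  then obtain a1 where a1: "\<forall>b. Q1 [i, a1, b]" using Q1 by blast
  have "\<forall>a. \<exists>b. \<not> Q0 [i, a, b]" using Q0 False by blast
  then have "\<forall>\<^sub>F s in sequentially. \<forall>a\<le>a1. \<not> witness_alive Q0 i a s"
    using eventually_witnesses_dead[where A="Suc a1"] by (simp add: less_Suc_eq_le)
  then have "\<forall>\<^sub>F s in sequentially. \<not> limit_approx Q0 Q1 i s"
  proof eventually_elim
    case (elim s)
    have "witness_alive Q1 i a1 s" using a1 by (simp add: witness_alive_def)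
    with elim show ?case
      unfolding limit_approx_def by (meson not_le)
  qed
  then show ?thesis using False by simp
qed

lemma computable_rel_witness_alive:
  assumes "computable_rel Y 3 Q"
  shows "computable_rel Y 3 (\<lambda>xs. witness_alive Q (xs ! 1) (xs ! 0) (xs ! 2))"
proof -
  have "computable_rel Y 4 (\<lambda>ys. Q [ys ! 2, ys ! 1, ys ! 0])"
    using computable_rel_reindex[OF assms, of "[2, 1, 0]" 4] by simp
  then have "computable_rel Y 3 (\<lambda>xs. \<forall>b<Suc (xs ! 2). Q [(b # xs) ! 2, (b # xs) ! 1, (b # xs) ! 0])"
    by (rule computable_rel_ball[where n=3, simplified]) (intro recfn_Suc recfn.proj, simp)
  then show ?thesis
    by (rule computable_rel_ext) (auto simp: witness_alive_def less_Suc_eq_le)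
qed

lemma computable_rel_limit_approx:
  assumes "computable_rel Y 3 Q0" and "computable_rel Y 3 Q1"
  shows "computable_rel Y 2 (\<lambda>xs. limit_approx Q0 Q1 (xs ! 0) (xs ! 1))"
proof -
  have "computable_rel Y 4 (\<lambda>ys. \<not> witness_alive Q1 (ys ! 2) (ys ! 0) (ys ! 3))"
    using computable_rel_reindex[OF computable_rel_witness_alive[OF assms(2)], of "[0, 2, 3]" 4]
    by (intro computable_rel_not) simp
  then have "computable_rel Y 3 (\<lambda>xs. \<forall>a'<xs ! 0.
      \<not> witness_alive Q1 ((a' # xs) ! 2) ((a' # xs) ! 0) ((a' # xs) ! 3))"
    by (rule computable_rel_ball[where n=3, simplified]) (intro recfn.proj, simp)
  then have "computable_rel Y 3 (\<lambda>xs. witness_alive Q0 (xs ! 1) (xs ! 0) (xs ! 2) \<and>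
      (\<forall>a'<xs ! 0. \<not> witness_alive Q1 ((a' # xs) ! 2) ((a' # xs) ! 0) ((a' # xs) ! 3)))"
    by (rule computable_rel_conj[OF computable_rel_witness_alive[OF assms(1)]])
  then have "computable_rel Y 2 (\<lambda>xs. \<exists>a<Suc (xs ! 1).
      witness_alive Q0 ((a # xs) ! 1) ((a # xs) ! 0) ((a # xs) ! 2) \<and>
      (\<forall>a'<(a # xs) ! 0. \<not> witness_alive Q1 ((a' # a # xs) ! 2) ((a' # a # xs) ! 0) ((a' # a # xs) ! 3)))"
    by (rule computable_rel_bex[where n=2, simplified]) (intro recfn_Suc recfn.proj, simp)
  then show ?thesis
    by (rule computable_rel_ext) (auto simp: limit_approx_def less_Suc_eq_le)
qed

lemma Delta2_limit_approx:
  assumes "Delta2 Y X"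
  obtains G where "computable_rel Y 2 (\<lambda>xs. G (xs ! 0) (xs ! 1))"
    and "\<And>i. \<forall>\<^sub>F s in sequentially. G i s \<longleftrightarrow> i \<in> X"
proof -
  obtain Q0 where "computable_rel Y 3 Q0" and "\<forall>i. i \<in> X \<longleftrightarrow> (\<exists>a. \<forall>b. Q0 [i, a, b])"
    using assms unfolding Delta2_def Sigma2_def by blast
  moreover obtain Q1 where "computable_rel Y 3 Q1" and "\<forall>i. i \<notin> X \<longleftrightarrow> (\<exists>a. \<forall>b. Q1 [i, a, b])"
    using assms unfolding Delta2_def Pi2_def Sigma2_def by auto
  ultimately show thesis
    using that[of "limit_approx Q0 Q1"] computable_rel_limit_approx eventually_limit_approx_iff
    by blast
qed

section \<open>Finite variants of a sequence\<close>

lemma gen_imp_finite_diff: "\<sigma> \<in> gen b \<Longrightarrow> finite {x. \<sigma> x \<noteq> b}"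
proof (induction rule: gen.induct)
  case (step \<sigma> \<nu>)
  have "{x. F \<nu> \<sigma> x \<noteq> b} \<subseteq> {x. \<sigma> x \<noteq> b} \<union> {..<length \<nu>}"
    by (auto simp: F_def nu_val_def)
  then show ?case
    using step finite_subset by blast
qed simp

lemma finite_diff_imp_gen: "finite {x. \<sigma> x \<noteq> b} \<Longrightarrow> \<sigma> \<in> gen b"
proof (induction "{x. \<sigma> x \<noteq> b}" arbitrary: \<sigma> rule: finite_induct)
  case empty
  then have "\<sigma> = (\<lambda>_. b)" by auto
  then show ?case by (simp add: gen.base)
next
  case (insert y D)
  have y: "\<sigma> y \<noteq> b" and D: "D = {x. (\<sigma>(y := b)) x \<noteq> b}"
    using insert.hyps(2,4) by (auto simp: set_eq_iff)
  have "\<sigma>(y := b) \<in> gen b"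
    using insert.hyps(3)[OF D] .
  moreover have "F (replicate y False @ [True]) (\<sigma>(y := b)) = \<sigma>" \<comment> \<open>flips exactly position y\<close>
    using y by (auto simp: F_def nu_val_def nth_append fun_eq_iff)
  ultimately show ?case
    by (metis gen.step)
qed

lemma gen_iff_finite_diff: "\<sigma> \<in> gen b \<longleftrightarrow> finite {x. \<sigma> x \<noteq> b}"
  using gen_imp_finite_diff finite_diff_imp_gen by blast

lemma bit_nat_ge: "a \<le> x \<Longrightarrow> \<not> bit (a :: nat) x"
proof -
  assume "a \<le> x"
  then have "a < 2 ^ x"
    using less_exp[of x] by linarith
  then show ?thesis
    by (simp add: bit_iff_odd)
qed

lemma finite_bits_nat: "finite {x. bit (a :: nat) x}"
proof (rule finite_subset)
  show "{x. bit a x} \<subseteq> {..<a}"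
    using bit_nat_ge by (auto simp: not_le[symmetric])
qed simp

lemma ex_nat_bits_eq: "finite D \<Longrightarrow> \<exists>a :: nat. \<forall>x. bit a x \<longleftrightarrow> x \<in> D"
proof (induction D rule: finite_induct)
  case empty
  then show ?case by (intro exI[of _ 0]) simp
next
  case (insert y D)
  then obtain a :: nat where "\<forall>x. bit a x \<longleftrightarrow> x \<in> D" by blast
  then show ?case
    by (intro exI[of _ "or a (2 ^ y)"]) (auto simp: bit_or_iff bit_exp_iff)
qed

definition finite_variant :: "(nat \<Rightarrow> bool) \<Rightarrow> nat \<Rightarrow> nat \<Rightarrow> bool" where
  "finite_variant g a = (\<lambda>x. g x \<noteq> bit a x)"

lemma finite_variant_inj: "inj (finite_variant g)"
proof (rule injI)
  fix a a' assume "finite_variant g a = finite_variant g a'"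
  then have "bit a x = bit a' x" for x
    unfolding finite_variant_def fun_eq_iff by metis
  then show "a = a'"
    by (simp add: bit_eq_iff)
qed

lemma finite_variant_range:
  assumes "\<forall>\<^sub>F x in sequentially. g x = b"
  shows "range (finite_variant g) = gen b"
proof -
  obtain N where "\<And>x. N \<le> x \<Longrightarrow> g x = b"
    using assms unfolding eventually_sequentially by blast
  then have "{x. g x \<noteq> b} \<subseteq> {..<N}"
    by (auto simp flip: not_le)
  then have fin_g: "finite {x. g x \<noteq> b}"
    by (rule finite_subset) simp
  show ?thesis
  proof (intro equalityI subsetI)
    fix \<sigma> assume "\<sigma> \<in> range (finite_variant g)"
    then obtain a where \<sigma>: "\<sigma> = finite_variant g a" by blast
    have "{x. \<sigma> x \<noteq> b} \<subseteq> {x. g x \<noteq> b} \<union> {x. bit a x}"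
      by (auto simp: \<sigma> finite_variant_def)
    then show "\<sigma> \<in> gen b"
      unfolding gen_iff_finite_diff by (rule finite_subset) (intro finite_UnI fin_g finite_bits_nat)
  next
    fix \<sigma> assume "\<sigma> \<in> gen b"
    then have "finite ({x. \<sigma> x \<noteq> b} \<union> {x. g x \<noteq> b})"
      using fin_g by (simp add: gen_iff_finite_diff)
    then have "finite {x. \<sigma> x \<noteq> g x}"
      by (rule finite_subset[rotated]) auto
    then obtain a :: nat where "\<forall>x. bit a x \<longleftrightarrow> x \<in> {x. \<sigma> x \<noteq> g x}"
      using ex_nat_bits_eq by blast
    then have "finite_variant g a = \<sigma>"
      by (auto simp: finite_variant_def fun_eq_iff)
    then show "\<sigma> \<in> range (finite_variant g)" by blast
  qed
qed

definition finite_variant_struct :: "(nat \<Rightarrow> bool) \<Rightarrow> nat rstruct" where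
  "finite_variant_struct g =
     \<lparr> univ = UNIV,
       grel = (\<lambda>\<nu> a a'. F \<nu> (finite_variant g a) = finite_variant g a'),
       urel = (\<lambda>\<nu> a. R \<nu> (finite_variant g a)) \<rparr>"

lemma finite_variant_struct_iso:
  assumes "\<forall>\<^sub>F x in sequentially. g x = b"
  shows "rstruct_iso (finite_variant_struct g) (S_rel b)"
proof -
  note range = finite_variant_range[OF assms]
  then have "bij_betw (finite_variant g) UNIV (gen b)"
    using finite_variant_inj by (simp add: bij_betw_def)
  moreover have "finite_variant g a \<in> gen b" for a
    using range by blast
  ultimately show ?thesis
    unfolding rstruct_iso_def finite_variant_struct_def S_rel_def
    by (intro exI[of _ "finite_variant g"]) simp
qed

section \<open>Coding the atomic diagram\<close>

definition str_code_tl :: "nat \<Rightarrow> nat" where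
  "str_code_tl n = (n - 1) div 2"

definition code_drop :: "nat \<Rightarrow> nat \<Rightarrow> nat" where
  "code_drop x n = (str_code_tl ^^ x) n"

lemma code_drop_str_code: "code_drop x (str_code bs) = str_code (drop x bs)"
proof (induction x)
  case (Suc x)
  have "str_code_tl (str_code cs) = str_code (tl cs)" for cs
    by (cases cs) (auto simp: str_code_tl_def)
  then show ?case
    using Suc by (simp add: code_drop_def drop_Suc tl_drop)
qed (simp add: code_drop_def)

lemma code_drop_str_code_eq_0_iff: "code_drop x (str_code \<nu>) = 0 \<longleftrightarrow> length \<nu> \<le> x"
  by (cases "drop x \<nu>") (auto simp: code_drop_str_code simp flip: drop_eq_Nil)

lemma nu_val_code_drop:
  "nu_val \<nu> x \<longleftrightarrow> code_drop x (str_code \<nu>) \<noteq> 0 \<and> even (code_drop x (str_code \<nu>))"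
proof (cases "x < length \<nu>")
  case True
  then have "code_drop x (str_code \<nu>) = str_code (\<nu> ! x # drop (Suc x) \<nu>)"
    by (simp add: code_drop_str_code Cons_nth_drop_Suc)
  then show ?thesis
    using True by (simp add: nu_val_def)
qed (simp add: nu_val_def code_drop_str_code_eq_0_iff)

lemma length_le_str_code: "length bs \<le> str_code bs"
  by (induction bs) auto

definition code_R :: "(nat \<Rightarrow> bool) \<Rightarrow> nat \<Rightarrow> bool" where
  "code_R \<sigma> n \<longleftrightarrow> (\<forall>x<n. code_drop x n \<noteq> 0 \<longrightarrow> (\<sigma> x \<longleftrightarrow> even (code_drop x n)))"

lemma R_iff_code_R: "R \<nu> \<sigma> \<longleftrightarrow> code_R \<sigma> (str_code \<nu>)"
proof -
  have "R \<nu> \<sigma> \<longleftrightarrow> (\<forall>x<length \<nu>. \<sigma> x \<longleftrightarrow> nu_val \<nu> x)"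
    by (auto simp: R_def nu_val_def)
  also have "\<dots> \<longleftrightarrow> code_R \<sigma> (str_code \<nu>)"
    using length_le_str_code[of \<nu>]
    by (auto simp: code_R_def nu_val_code_drop code_drop_str_code_eq_0_iff)
  finally show ?thesis .
qed

text \<open>Beyond n + a + a' the string coded by n and the bits of a and a' all vanish,
  so the bounded quantifier loses nothing.\<close>

definition code_F_graph :: "nat \<Rightarrow> nat \<Rightarrow> nat \<Rightarrow> bool" where
  "code_F_graph n a a' \<longleftrightarrow>
     (\<forall>x<n + a + a'. bit a' x \<longleftrightarrow> bit a x \<noteq> (code_drop x n \<noteq> 0 \<and> even (code_drop x n)))"

lemma F_finite_variant_eq_iff:
  "F \<nu> (finite_variant g a) = finite_variant g a' \<longleftrightarrow> code_F_graph (str_code \<nu>) a a'"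
proof -
  have "F \<nu> (finite_variant g a) = finite_variant g a' \<longleftrightarrow> (\<forall>x. bit a' x \<longleftrightarrow> bit a x \<noteq> nu_val \<nu> x)"
    by (auto simp: F_def finite_variant_def fun_eq_iff)
  also have "\<dots> \<longleftrightarrow> (\<forall>x<str_code \<nu> + a + a'. bit a' x \<longleftrightarrow> bit a x \<noteq> nu_val \<nu> x)"
  proof -
    have "\<not> bit a x \<and> \<not> bit a' x \<and> \<not> nu_val \<nu> x" if "str_code \<nu> + a + a' \<le> x" for x
      using that bit_nat_ge[of a x] bit_nat_ge[of a' x] length_le_str_code[of \<nu>]
      by (auto simp: nu_val_def)
    then show ?thesis
      by (meson not_le)
  qed
  also have "\<dots> \<longleftrightarrow> code_F_graph (str_code \<nu>) a a'"
    by (simp add: code_F_graph_def nu_val_code_drop)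
  finally show ?thesis .
qed

lemma funpow_div2: "((\<lambda>a :: nat. a div 2) ^^ k) a = a div 2 ^ k"
  by (induction k) (simp_all add: div_mult2_eq power_Suc2 del: power_Suc)

lemma computable_rel_bit: "computable_rel Y 2 (\<lambda>xs. bit (xs ! 1) (xs ! 0))"
proof -
  have "recfn Y 2 (\<lambda>xs. [((\<lambda>a. [a] ! 0 div 2) ^^ (xs ! 0)) (xs ! 1)] ! 0 mod 2)"
    by (rule recfn_compose1[OF recfn_mod2 recfn_funpow[OF recfn_div2]])
  then have "recfn Y 2 (\<lambda>xs. xs ! 1 div 2 ^ (xs ! 0) mod 2)"
    by (simp add: funpow_div2)
  from computable_rel_not[OF computable_rel_eq_0[OF this]] show ?thesis
    by (rule computable_rel_ext) (simp add: bit_iff_odd odd_iff_mod_2_eq_one)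
qed

lemma recfn_code_drop: "recfn Y 2 (\<lambda>xs. code_drop (xs ! 0) (xs ! 1))"
proof -
  have "recfn Y 1 (\<lambda>xs. [xs ! 0 - 1] ! 0 div 2)"
    by (rule recfn_compose1[OF recfn_div2 recfn_pred])
  then have "recfn Y 1 (\<lambda>xs. str_code_tl (xs ! 0))"
    by (simp add: str_code_tl_def)
  from recfn_funpow[OF this] show ?thesis
    by (simp add: code_drop_def)
qed

lemma computable_rel_even_code_drop:
  assumes "i < n" and "j < n"
  shows "computable_rel Y n (\<lambda>xs. even (code_drop (xs ! i) (xs ! j)))"
proof -
  have "recfn Y n (\<lambda>xs. code_drop (xs ! i) (xs ! j) mod 2)"
    using recfn_compose1[OF recfn_mod2 recfn_compose2[OF recfn_code_drop recfn.proj recfn.proj]] assms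
    by simp
  from computable_rel_eq_0[OF this] show ?thesis
    by (rule computable_rel_ext) (simp add: even_iff_mod_2_eq_zero)
qed

lemma computable_rel_code_F_graph: "computable_rel Y 4 (\<lambda>xs. code_F_graph (xs ! 1) (xs ! 2) (xs ! 3))"
proof -
  have "computable_rel Y 5 (\<lambda>ys. bit (ys ! 4) (ys ! 0) \<longleftrightarrow> bit (ys ! 3) (ys ! 0) \<noteq>
      (code_drop (ys ! 0) (ys ! 2) \<noteq> 0 \<and> even (code_drop (ys ! 0) (ys ! 2))))"
    using computable_rel_reindex[OF computable_rel_bit, of "[0, 3]" 5]
      computable_rel_reindex[OF computable_rel_bit, of "[0, 4]" 5]
      recfn_compose2[OF recfn_code_drop recfn.proj[of 0 5] recfn.proj[of 2 5]]
    by (intro computable_rel_iff computable_rel_not computable_rel_conj computable_rel_eq_0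
        computable_rel_even_code_drop) simp_all
  moreover have "recfn Y 4 (\<lambda>xs. xs ! 1 + xs ! 2 + xs ! 3)"
    using recfn_compose2[OF recfn_add recfn_compose2[OF recfn_add recfn.proj[of 1 4] recfn.proj[of 2 4]]
        recfn.proj[of 3 4]]
    by simp
  ultimately have "computable_rel Y 4 (\<lambda>xs. \<forall>x<xs ! 1 + xs ! 2 + xs ! 3.
      bit ((x # xs) ! 4) ((x # xs) ! 0) \<longleftrightarrow> bit ((x # xs) ! 3) ((x # xs) ! 0) \<noteq>
      (code_drop ((x # xs) ! 0) ((x # xs) ! 2) \<noteq> 0 \<and> even (code_drop ((x # xs) ! 0) ((x # xs) ! 2))))"
    by (rule computable_rel_ball[where n=4, simplified])
  then show ?thesis
    by (rule computable_rel_ext) (simp add: code_F_graph_def)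
qed

lemma computable_rel_code_R_finite_variant:
  assumes "computable_rel Y 2 (\<lambda>xs. G (xs ! 0) (xs ! 1))"
  shows "computable_rel Y 3 (\<lambda>xs. code_R (finite_variant (G (xs ! 0)) (xs ! 2)) (xs ! 1))"
proof -
  have "computable_rel Y 4 (\<lambda>ys. code_drop (ys ! 0) (ys ! 2) \<noteq> 0 \<longrightarrow>
      ((G (ys ! 1) (ys ! 0) \<noteq> bit (ys ! 3) (ys ! 0)) \<longleftrightarrow> even (code_drop (ys ! 0) (ys ! 2))))"
    using computable_rel_reindex[OF assms, of "[1, 0]" 4]
      computable_rel_reindex[OF computable_rel_bit, of "[0, 3]" 4]
      recfn_compose2[OF recfn_code_drop recfn.proj[of 0 4] recfn.proj[of 2 4]]
    by (intro computable_rel_imp computable_rel_iff computable_rel_not computable_rel_eq_0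
        computable_rel_even_code_drop) simp_all
  then have "computable_rel Y 3 (\<lambda>xs. \<forall>x<xs ! 1. code_drop ((x # xs) ! 0) ((x # xs) ! 2) \<noteq> 0 \<longrightarrow>
      ((G ((x # xs) ! 1) ((x # xs) ! 0) \<noteq> bit ((x # xs) ! 3) ((x # xs) ! 0)) \<longleftrightarrow>
        even (code_drop ((x # xs) ! 0) ((x # xs) ! 2))))"
    by (rule computable_rel_ball[where n=3, simplified]) (intro recfn.proj, simp)
  then show ?thesis
    by (rule computable_rel_ext) (simp add: code_R_def finite_variant_def)
qed

lemma unif_computable_finite_variant_struct:
  assumes "computable_rel Y 2 (\<lambda>xs. G (xs ! 0) (xs ! 1))"
  shows "unif_computable Y (\<lambda>i. finite_variant_struct (G i))"
  unfolding unif_computable_def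
proof (intro conjI allI exI)
  show "univ (finite_variant_struct (G i)) = UNIV" for i
    by (simp add: finite_variant_struct_def)
  show "computable_rel Y 4 (\<lambda>xs. code_F_graph (xs ! 1) (xs ! 2) (xs ! 3))"
    by (rule computable_rel_code_F_graph)
  show "grel (finite_variant_struct (G i)) \<nu> a a' \<longleftrightarrow>
      code_F_graph ([i, str_code \<nu>, a, a'] ! 1) ([i, str_code \<nu>, a, a'] ! 2) ([i, str_code \<nu>, a, a'] ! 3)"
    for i \<nu> a a'
    by (simp add: finite_variant_struct_def F_finite_variant_eq_iff)
  show "computable_rel Y 3 (\<lambda>xs. code_R (finite_variant (G (xs ! 0)) (xs ! 2)) (xs ! 1))"
    by (rule computable_rel_code_R_finite_variant[OF assms])
  show "urel (finite_variant_struct (G i)) \<nu> a \<longleftrightarrow>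
      code_R (finite_variant (G ([i, str_code \<nu>, a] ! 0)) ([i, str_code \<nu>, a] ! 2)) ([i, str_code \<nu>, a] ! 1)"
    for i \<nu> a
    by (simp add: finite_variant_struct_def R_iff_code_R)
qed

theorem lemma4p7:
  fixes Y X :: "nat set"
  assumes "Delta2 Y X"
  shows "\<exists>C :: nat \<Rightarrow> nat rstruct. unif_computable Y C \<and>
           (\<forall>i. (i \<in> X \<longrightarrow> rstruct_iso (C i) (S_rel False)) \<and>
                (i \<notin> X \<longrightarrow> rstruct_iso (C i) (S_rel True)))"
proof -
  obtain G where G: "computable_rel Y 2 (\<lambda>xs. G (xs ! 0) (xs ! 1))"
    and lim: "\<And>i. \<forall>\<^sub>F s in sequentially. G i s \<longleftrightarrow> i \<in> X"
    using Delta2_limit_approx[OF assms] by blast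
  let ?C = "\<lambda>i. finite_variant_struct (\<lambda>s. \<not> G i s)"
  have iso: "rstruct_iso (?C i) (S_rel (i \<notin> X))" for i
    using lim[of i] by (intro finite_variant_struct_iso) (rule eventually_mono, auto)
  show ?thesis
  proof (intro exI[of _ ?C] conjI allI impI)
    show "unif_computable Y ?C"
      by (rule unif_computable_finite_variant_struct[OF computable_rel_not[OF G]])
  next
    show "rstruct_iso (?C i) (S_rel False)" if "i \<in> X" for i
      using iso[of i] that by simp
  next
    show "rstruct_iso (?C i) (S_rel True)" if "i \<notin> X" for i
      using iso[of i] that by simp
  qed
qed

end
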